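(* Let $\mathcal{H}=\mathbb{C}^d$ and consider a generalized Pauli dynamics $\{\Lambda_t\}_{t\ge0}$, i.e. one generated by a time-local generator $\mathcal{K}^{\mathrm{TCL}}_t=\sum_{\alpha=1}^{d+1}\gamma_\alpha(t)\mathcal{L}_\alpha$ with $\mathcal{L}_\alpha(\rho)=\frac1d\sum_{k=0}^{d-1}U_\alpha^k\rho\,U_\alpha^{k\dagger}-\rho$, where $U_1,\dots,U_{d+1}$ are unitaries whose eigenvector bases form $d+1$ mutually unbiased bases, and suppose it also satisfies $\frac{\mathrm{d}}{\mathrm{d}t}\Lambda_t=\int_0^t\mathrm{d}\tau\,\mathcal{K}^{\mathrm{NZ}}_{t-\tau}\Lambda_\tau$ for a memory kernel $\mathcal{K}^{\mathrm{NZ}}_t$. Write $\mathcal{K}^{\mathrm{TCL}}_t=\sum_\alpha m^{\mathrm{TCL}}_\alpha(t)\mathcal{M}_\alpha$ in its (time-independent) eigenbasis decomposition, let $G_\alpha(t)=\frac{\mathrm{d}}{\mathrm{d}t}\exp\!\left(\int_0^t m^{\mathrm{TCL}}_\alpha(\tau)\mathrm{d}\tau\right)$, and assume $|\widetilde{G_\alpha}(u)|<1$ for all $\alpha$. Let $m^{\mathrm{Red}}_\alpha(t)$ denote the eigenvalues of the Redfield-like generator $\mathcal{K}^{\mathrm{Red}}_t=\int_0^t\mathrm{d}\tau\,\mathcal{K}^{\mathrm{NZ}}_\tau=\sum_\alpha m^{\mathrm{Red}}_\alpha(t)\mathcal{M}_\alpha$. If $m^{\mathrm{Red}}_\alpha(t)>0$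 for some $\alpha$ and some $t\ge0$, then $\{\Lambda_t\}_{t\ge0}$ is not P-divisible.
   Context: Two orthonormal bases $\{e_i\},\{f_j\}$ of $\mathbb{C}^d$ are mutually unbiased if $|\langle e_i,f_j\rangle|^2=1/d$ for all $i,j$. For a map $\mathcal{M}_\alpha$ in the eigen-decomposition, $\mathcal{M}_\alpha(\omega)=\mathrm{Tr}[\varsigma_\alpha^\dagger\omega]\tau_\alpha$ with $\mathrm{Tr}[\varsigma_\alpha^\dagger\tau_\beta]=\delta_{\alpha\beta}$. A family $\{\Lambda_t\}$ is P-divisible if for all $t\ge s\ge0$, $\Lambda_t=V_{t,s}\Lambda_s$ with $V_{t,s}$ positive and trace-preserving. $\widetilde{G_\alpha}(u)$ is the Laplace transform of $G_\alpha$. *)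

theory Defs
  imports "HOL-Analysis.Analysis"
begin

type_synonym 'n cmat = "complex^'n^'n"
type_synonym 'n supop = "'n cmat \<Rightarrow> 'n cmat"

definition adj :: "'n::finite cmat \<Rightarrow> 'n cmat" where
  "adj X = (\<chi> i j. cnj (X $ j $ i))"

definition csmult :: "complex \<Rightarrow> 'n::finite cmat \<Rightarrow> 'n cmat" where
  "csmult c X = (\<chi> i j. c * X $ i $ j)"

definition cinner :: "complex^'n::finite \<Rightarrow> complex^'n \<Rightarrow> complex" where
  "cinner x y = (\<Sum>i\<in>UNIV. cnj (x $ i) * y $ i)"

definition ket_bra :: "complex^'n::finite \<Rightarrow> complex^'n \<Rightarrow> 'n cmat" where
  "ket_bra x y = (\<chi> i j. x $ i * cnj (y $ j))"

definition mpow :: "'n::finite cmat \<Rightarrow> nat \<Rightarrow> 'n cmat" where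
  "mpow U k = (((**) U) ^^ k) (mat 1)"

definition clinear_map :: "'n::finite supop \<Rightarrow> bool" where
  "clinear_map V \<longleftrightarrow> (\<forall>x y. V (x + y) = V x + V y) \<and> (\<forall>c x. V (csmult c x) = csmult c (V x))"

definition psd :: "'n::finite cmat \<Rightarrow> bool" where
  "psd X \<longleftrightarrow> adj X = X \<and> (\<forall>x. 0 \<le> Re (cinner x (X *v x)))"

definition positive_map :: "'n::finite supop \<Rightarrow> bool" where
  "positive_map V \<longleftrightarrow> (\<forall>X. psd X \<longrightarrow> psd (V X))"

definition trace_preserving :: "'n::finite supop \<Rightarrow> bool" where
  "trace_preserving V \<longleftrightarrow> (\<forall>X. trace (V X) = trace X)"

definition P_divisible :: "(real \<Rightarrow> 'n::finite supop) \<Rightarrow> bool" where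
  "P_divisible \<Lambda> \<longleftrightarrow> (\<forall>t s. 0 \<le> s \<and> s \<le> t \<longrightarrow>
     (\<exists>V. clinear_map V \<and> positive_map V \<and> trace_preserving V \<and> \<Lambda> t = V \<circ> \<Lambda> s))"

definition orthonormal_basis :: "(nat \<Rightarrow> complex^'n::finite) \<Rightarrow> bool" where
  "orthonormal_basis \<psi> \<longleftrightarrow> (\<forall>j<CARD('n). \<forall>k<CARD('n). cinner (\<psi> j) (\<psi> k) = (if j = k then 1 else 0))"

definition mutually_unbiased :: "(nat \<Rightarrow> complex^'n::finite) \<Rightarrow> (nat \<Rightarrow> complex^'n) \<Rightarrow> bool" where
  "mutually_unbiased e f \<longleftrightarrow> (\<forall>i<CARD('n). \<forall>j<CARD('n). (cmod (cinner (e i) (f j)))^2 = 1 / real CARD('n))"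

definition pauli_unitary :: "(nat \<Rightarrow> complex^'n::finite) \<Rightarrow> 'n cmat" where
  "pauli_unitary \<psi> = (\<Sum>k<CARD('n). csmult (cis (2 * pi / real CARD('n)) ^ k) (ket_bra (\<psi> k) (\<psi> k)))"

definition pauli_L :: "'n::finite cmat \<Rightarrow> 'n supop" where
  "pauli_L U \<rho> = csmult (1 / of_nat CARD('n)) (\<Sum>k<CARD('n). mpow U k ** \<rho> ** adj (mpow U k)) - \<rho>"

definition rank1_map :: "'n::finite cmat \<Rightarrow> 'n cmat \<Rightarrow> 'n supop" where
  "rank1_map \<sigma> \<tau> \<omega> = csmult (trace (adj \<sigma> ** \<omega>)) \<tau>"

end

theory Submission
  imports Defs
begin

text \<open>
  Every generalized Pauli generator \<open>\<L>\<^sub>\<alpha>\<close> is self-adjoint for the Hilbert--Schmidt inner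
  product, hence so is \<open>\<K>\<^sup>T\<^sup>C\<^sup>L\<^sub>t\<close>, and its eigenvalues \<open>m\<^sub>\<alpha>(t)\<close> are real. As the eigenbasis
  does not depend on \<open>t\<close>, the dynamics maps the eigenoperator \<open>\<tau>\<^sub>\<alpha>\<close> to \<open>\<eta>(t) \<tau>\<^sub>\<alpha>\<close> with
  \<open>\<eta>(t) = exp \<integral>\<^sub>0\<^sup>t m\<^sub>\<alpha> > 0\<close>. A real eigenvalue of a positive trace-preserving map is at most
  \<open>1\<close> (iterate it and compare with the image of a multiple of the identity), so P-divisibility
  makes \<open>\<eta>\<close> nonincreasing. Projecting the Nakajima--Zwanzig equation onto \<open>\<tau>\<^sub>\<alpha>\<close> gives the
  Volterra equation \<open>\<eta>'(t) = \<integral>\<^sub>0\<^sup>t \<eta>(t - r) k(r) dr\<close> with \<open>k(r) = Re Tr[\<sigma>\<^sub>\<alpha>\<^sup>\<dagger> \<K>\<^sup>N\<^sup>Z\<^sub>r \<tau>\<^sub>\<alpha>]\<close>,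
  whose left-hand side is \<open>\<le> 0\<close>. At a maximiser \<open>s\<close> of \<open>\<kappa>(t) = \<integral>\<^sub>0\<^sup>t k\<close>, Bonnet's mean value
  theorem bounds the right-hand side below by \<open>\<eta>(s) \<kappa>(s)\<close>, so \<open>\<kappa> \<le> 0\<close>; but
  \<open>\<kappa>(t) = Re m\<^sup>R\<^sup>e\<^sup>d\<^sub>\<alpha>(t)\<close>.
\<close>

section \<open>Matrix algebra\<close>

abbreviation hs_inner :: "'n::finite cmat \<Rightarrow> 'n cmat \<Rightarrow> complex" where
  "hs_inner A B \<equiv> trace (adj A ** B)"

lemma csmult_nth [simp]: "csmult c X $ i $ j = c * X $ i $ j"
  by (simp add: csmult_def)

lemma adj_nth [simp]: "adj X $ i $ j = cnj (X $ j $ i)"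
  by (simp add: adj_def)

lemma ket_bra_nth [simp]: "ket_bra x y $ i $ j = x $ i * cnj (y $ j)"
  by (simp add: ket_bra_def)

lemma csmult_add: "csmult c (X + Y) = csmult c X + csmult c Y"
  by (simp add: vec_eq_iff distrib_left)

lemma csmult_add_left: "csmult (a + b) X = csmult a X + csmult b X"
  by (simp add: vec_eq_iff distrib_right)

lemma csmult_csmult [simp]: "csmult a (csmult b X) = csmult (a * b) X"
  by (simp add: vec_eq_iff)

lemma csmult_one [simp]: "csmult 1 X = X"
  by (simp add: vec_eq_iff)

lemma csmult_zero [simp]: "csmult 0 X = 0" "csmult c 0 = 0"
  by (simp_all add: vec_eq_iff)

lemma csmult_sum: "csmult c (sum f A) = (\<Sum>a\<in>A. csmult c (f a))"
  by (induction A rule: infinite_finite_induct) (auto simp: csmult_add)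

lemma csmult_of_real: "csmult (of_real r) X = r *\<^sub>R X"
  by (simp add: vec_eq_iff scaleR_conv_of_real[where 'a=complex])

lemma csmult_scaleR: "csmult c (r *\<^sub>R X) = r *\<^sub>R csmult c X"
  by (simp add: vec_eq_iff)

lemma csmult_mult_left: "csmult a X ** Y = csmult a (X ** Y)"
  by (simp add: vec_eq_iff matrix_matrix_mult_def sum_distrib_left mult_ac)

lemma csmult_mult_right: "X ** csmult a Y = csmult a (X ** Y)"
  by (simp add: vec_eq_iff matrix_matrix_mult_def sum_distrib_left mult_ac)

lemma matrix_add_rdistrib_complex: "(B + C) ** (A::'n::finite cmat) = B ** A + C ** A"
  by (simp add: vec_eq_iff matrix_matrix_mult_def sum.distrib distrib_right)

lemma sum_matrix_mult_left: "sum f S ** (Y::'n::finite cmat) = (\<Sum>a\<in>S. f a ** Y)"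
  by (induction S rule: infinite_finite_induct) (auto simp: matrix_add_rdistrib_complex)

lemma sum_matrix_mult_right: "(Y::'n::finite cmat) ** sum f S = (\<Sum>a\<in>S. Y ** f a)"
  by (induction S rule: infinite_finite_induct) (auto simp: matrix_add_ldistrib)

lemma adj_adj [simp]: "adj (adj X) = X"
  by (simp add: vec_eq_iff)

lemma adj_zero [simp]: "adj 0 = 0"
  by (simp add: vec_eq_iff)

lemma adj_add: "adj (X + Y) = adj X + adj Y"
  by (simp add: vec_eq_iff)

lemma adj_diff: "adj (X - Y) = adj X - adj Y"
  by (simp add: vec_eq_iff)

lemma adj_csmult: "adj (csmult c X) = csmult (cnj c) (adj X)"
  by (simp add: vec_eq_iff)

lemma adj_scaleR: "adj (r *\<^sub>R X) = r *\<^sub>R adj X"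
  by (simp add: vec_eq_iff)

lemma adj_sum: "adj (sum f S) = (\<Sum>a\<in>S. adj (f a))"
  by (induction S rule: infinite_finite_induct) (auto simp: adj_add)

lemma adj_matrix_mult: "adj (X ** Y) = adj Y ** adj X"
  by (simp add: vec_eq_iff matrix_matrix_mult_def mult.commute)

lemma adj_mat_of_real: "adj (mat (of_real c)) = mat (of_real c)"
  by (simp add: vec_eq_iff mat_def)

lemma adj_ket_bra_self: "adj (ket_bra a a) = ket_bra a a"
  by (simp add: vec_eq_iff mult.commute)

lemma ket_bra_mult: "ket_bra a b ** ket_bra c e = csmult (cinner b c) (ket_bra a e)"
  by (simp add: vec_eq_iff matrix_matrix_mult_def cinner_def sum_distrib_left sum_distrib_right mult_ac)

lemma hs_inner_expand: "hs_inner S X = (\<Sum>i\<in>UNIV. \<Sum>k\<in>UNIV. cnj (S $ k $ i) * X $ k $ i)"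
  by (simp add: trace_def matrix_matrix_mult_def)

lemma trace_zero [simp]: "trace (0 :: 'a::semiring_1^'n^'n) = 0"
  by (simp add: trace_def)

lemma hs_inner_add: "hs_inner S (X + Y) = hs_inner S X + hs_inner S Y"
  by (simp add: hs_inner_expand sum.distrib distrib_left)

lemma hs_inner_diff: "hs_inner S (X - Y) = hs_inner S X - hs_inner S Y"
  by (simp add: hs_inner_expand sum_subtractf right_diff_distrib)

lemma hs_inner_csmult: "hs_inner S (csmult c X) = c * hs_inner S X"
  by (simp add: hs_inner_expand sum_distrib_left mult.left_commute)

lemma hs_inner_sum: "hs_inner S (sum f A) = (\<Sum>a\<in>A. hs_inner S (f a))"
  by (induction A rule: infinite_finite_induct) (auto simp: hs_inner_add trace_zero)

lemma hs_inner_diff_left: "hs_inner (X - Y) Z = hs_inner X Z - hs_inner Y Z"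
  by (simp add: hs_inner_expand sum_subtractf left_diff_distrib)

lemma hs_inner_csmult_left: "hs_inner (csmult c S) X = cnj c * hs_inner S X"
  by (simp add: hs_inner_expand sum_distrib_left mult.assoc)

lemma hs_inner_sum_left: "hs_inner (sum f A) X = (\<Sum>a\<in>A. hs_inner (f a) X)"
  by (induction A rule: infinite_finite_induct)
     (auto simp: adj_sum adj_add matrix_add_rdistrib_complex trace_add trace_zero)

lemma bounded_linear_hs_inner: "bounded_linear (hs_inner S)"
proof -
  have "hs_inner S (r *\<^sub>R X) = r *\<^sub>R hs_inner S X" for r X
    using hs_inner_csmult[of S "of_real r" X] by (simp add: csmult_of_real scaleR_conv_of_real)
  then have "linear (hs_inner S)"
    by (intro linearI) (simp_all add: hs_inner_add)
  then show ?thesis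
    by (simp add: linear_conv_bounded_linear)
qed

lemma bounded_linear_csmult_left: "bounded_linear (\<lambda>c. csmult c (X :: 'n::finite cmat))"
proof -
  have "linear (\<lambda>c. csmult c X)"
    by (intro linearI) (simp_all add: csmult_add_left vec_eq_iff)
  then show ?thesis
    by (simp add: linear_conv_bounded_linear)
qed

lemma hs_inner_self_nonzero:
  assumes "X \<noteq> 0"
  shows "hs_inner X X \<noteq> 0"
proof -
  obtain i k where ik: "X $ k $ i \<noteq> 0"
    using assms by (metis vec_eq_iff zero_index)
  have "Re (hs_inner X X) = (\<Sum>i\<in>UNIV. \<Sum>k\<in>UNIV. (cmod (X $ k $ i))\<^sup>2)"
    unfolding cmod_power2 by (simp add: hs_inner_expand Re_sum power2_eq_square)
  also have "\<dots> > 0"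
    using ik by (intro sum_pos2[of _ i] sum_pos2[of _ k]) (auto intro: sum_nonneg)
  finally show ?thesis
    by auto
qed

lemma conjugation_hs_inner: "hs_inner X (W ** \<rho> ** adj W) = hs_inner (adj W ** X ** W) \<rho>"
proof -
  have "hs_inner (adj W ** X ** W) \<rho> = trace (adj W ** (adj X ** W ** \<rho>))"
    by (simp add: adj_matrix_mult matrix_mul_assoc)
  also have "\<dots> = trace ((adj X ** W ** \<rho>) ** adj W)"
    by (rule trace_mul_sym)
  finally show ?thesis
    by (simp add: matrix_mul_assoc)
qed

section \<open>Self-adjointness of the generalized Pauli generators\<close>

definition hs_selfadjoint :: "'n::finite supop \<Rightarrow> bool" where
  "hs_selfadjoint K \<longleftrightarrow> (\<forall>A B. hs_inner A (K B) = hs_inner (K A) B)"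

lemma hs_selfadjoint_eigenvalue_real:
  assumes "hs_selfadjoint K" and eig: "K X = csmult \<mu> X" and "X \<noteq> 0"
  shows "\<mu> \<in> \<real>"
proof -
  have "\<mu> * hs_inner X X = hs_inner X (K X)"
    by (simp add: eig hs_inner_csmult)
  also have "\<dots> = hs_inner (K X) X"
    using assms(1) by (simp add: hs_selfadjoint_def)
  also have "\<dots> = cnj \<mu> * hs_inner X X"
    by (simp add: eig hs_inner_csmult_left)
  finally have "cnj \<mu> = \<mu>"
    using hs_inner_self_nonzero[OF \<open>X \<noteq> 0\<close>] by simp
  then show ?thesis
    by (simp add: Reals_cnj_iff)
qed

lemma hs_selfadjoint_real_combination:
  assumes "\<And>\<alpha>. \<alpha> \<in> S \<Longrightarrow> hs_selfadjoint (L \<alpha>)"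
  shows "hs_selfadjoint (\<lambda>\<rho>. \<Sum>\<alpha>\<in>S. csmult (of_real (\<gamma> \<alpha>)) (L \<alpha> \<rho>))"
  using assms by (simp add: hs_selfadjoint_def hs_inner_sum hs_inner_sum_left
      hs_inner_csmult hs_inner_csmult_left)

lemma negation_mod_involutive:
  fixes n :: nat
  assumes "k < n"
  shows "(n - (n - k) mod n) mod n = k"
  using assms by (cases "k = 0") auto

lemma reindex_negation_mod:
  fixes n :: nat
  assumes "0 < n"
  shows "(\<Sum>k<n. f ((n - k) mod n)) = (\<Sum>k<n. f k)"
  by (rule sum.reindex_bij_witness[where i="\<lambda>k. (n - k) mod n" and j="\<lambda>k. (n - k) mod n"])
     (use assms in \<open>auto simp: negation_mod_involutive\<close>)

lemma hs_selfadjoint_conjugation_sum: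
  fixes W :: "nat \<Rightarrow> 'n::finite cmat"
  assumes "0 < n" and adj_W: "\<And>k. k < n \<Longrightarrow> adj (W k) = W ((n - k) mod n)"
  shows "hs_selfadjoint (\<lambda>\<rho>. \<Sum>k<n. W k ** \<rho> ** adj (W k))"
  unfolding hs_selfadjoint_def
proof (intro allI)
  fix A \<rho> :: "'n cmat"
  have W_adj: "W k = adj (W ((n - k) mod n))" if "k < n" for k
    using adj_W[of "(n - k) mod n"] that \<open>0 < n\<close> by (simp add: negation_mod_involutive)
  have "hs_inner A (\<Sum>k<n. W k ** \<rho> ** adj (W k)) = hs_inner (\<Sum>k<n. adj (W k) ** A ** W k) \<rho>"
    by (simp add: hs_inner_sum hs_inner_sum_left conjugation_hs_inner)
  also have "(\<Sum>k<n. adj (W k) ** A ** W k)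
      = (\<Sum>k<n. W ((n - k) mod n) ** A ** adj (W ((n - k) mod n)))"
    by (intro sum.cong refl) (metis W_adj adj_adj lessThan_iff)
  also have "\<dots> = (\<Sum>k<n. W k ** A ** adj (W k))"
    by (rule reindex_negation_mod[OF \<open>0 < n\<close>])
  finally show "hs_inner A (\<Sum>k<n. W k ** \<rho> ** adj (W k))
      = hs_inner (\<Sum>k<n. W k ** A ** adj (W k)) \<rho>" .
qed

lemma cnj_power_root_of_unity:
  fixes z :: complex
  assumes "cmod z = 1" and "z ^ n = 1" and "k \<le> n"
  shows "cnj (z ^ k) = z ^ (n - k)"
proof -
  have "cnj (z ^ k) * z ^ k = 1"
    using assms(1)
    by (metis complex_norm_square mult.commute norm_power of_real_1 power_one)
  moreover have "z ^ k * z ^ (n - k) = 1"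
    using assms(2,3) by (simp flip: power_add)
  ultimately show ?thesis
    by (metis mult.assoc mult_1 mult_1_right)
qed

lemma pauli_unitary_power:
  fixes \<psi> :: "nat \<Rightarrow> complex^'n::finite"
  assumes onb: "orthonormal_basis \<psi>"
  defines "w \<equiv> cis (2 * pi / real CARD('n))"
  shows "mpow (pauli_unitary \<psi>) (Suc k) = (\<Sum>j<CARD('n). csmult ((w ^ j) ^ Suc k) (ket_bra (\<psi> j) (\<psi> j)))"
proof (induction k)
  case 0
  then show ?case
    by (simp add: mpow_def pauli_unitary_def w_def)
next
  case (Suc k)
  have diag: "(\<Sum>l<CARD('n). csmult (w ^ j * (w ^ l) ^ Suc k * cinner (\<psi> j) (\<psi> l)) (ket_bra (\<psi> j) (\<psi> l)))
      = csmult ((w ^ j) ^ Suc (Suc k)) (ket_bra (\<psi> j) (\<psi> j))" if "j < CARD('n)" for j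
  proof -
    have "(\<Sum>l<CARD('n). csmult (w ^ j * (w ^ l) ^ Suc k * cinner (\<psi> j) (\<psi> l)) (ket_bra (\<psi> j) (\<psi> l)))
        = (\<Sum>l<CARD('n). if l = j then csmult (w ^ j * (w ^ l) ^ Suc k) (ket_bra (\<psi> j) (\<psi> l)) else 0)"
      using onb that unfolding orthonormal_basis_def by (intro sum.cong) auto
    then show ?thesis
      using that by (simp add: mult_ac)
  qed
  have "mpow (pauli_unitary \<psi>) (Suc (Suc k)) = pauli_unitary \<psi> ** mpow (pauli_unitary \<psi>) (Suc k)"
    by (simp add: mpow_def)
  also have "\<dots> = pauli_unitary \<psi> ** (\<Sum>j<CARD('n). csmult ((w ^ j) ^ Suc k) (ket_bra (\<psi> j) (\<psi> j)))"
    by (simp only: Suc)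
  also have "\<dots> = (\<Sum>j<CARD('n). \<Sum>l<CARD('n).
      csmult (w ^ j * (w ^ l) ^ Suc k * cinner (\<psi> j) (\<psi> l)) (ket_bra (\<psi> j) (\<psi> l)))"
    unfolding pauli_unitary_def w_def[symmetric]
    by (simp add: sum_matrix_mult_left sum_matrix_mult_right csmult_mult_left csmult_mult_right
        ket_bra_mult csmult_sum mult_ac) (subst sum.swap, simp add: mult_ac)
  also have "\<dots> = (\<Sum>j<CARD('n). csmult ((w ^ j) ^ Suc (Suc k)) (ket_bra (\<psi> j) (\<psi> j)))"
    using diag by (intro sum.cong) auto
  finally show ?case .
qed

lemma adj_pauli_unitary_power:
  fixes \<psi> :: "nat \<Rightarrow> complex^'n::finite"
  assumes onb: "orthonormal_basis \<psi>" and "k < CARD('n)"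
  shows "adj (mpow (pauli_unitary \<psi>) k) = mpow (pauli_unitary \<psi>) ((CARD('n) - k) mod CARD('n))"
proof (cases k)
  case 0
  then show ?thesis
    by (simp add: mpow_def vec_eq_iff mat_def)
next
  case (Suc k')
  define w where "w = cis (2 * pi / real CARD('n))"
  define r where "r = CARD('n) - k - 1"
  have r: "CARD('n) - k = Suc r" "(CARD('n) - k) mod CARD('n) = Suc r"
    using \<open>k < CARD('n)\<close> Suc by (simp_all add: r_def)
  have "w ^ CARD('n) = cis (real CARD('n) * (2 * pi / real CARD('n)))"
    unfolding w_def by (rule Complex.DeMoivre)
  then have "w ^ CARD('n) = 1"
    by simp
  then have "(w ^ j) ^ CARD('n) = 1" for j
    by (metis mult.commute power_mult power_one)
  moreover have "cmod (w ^ j) = 1" for j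
    by (simp add: w_def norm_power)
  ultimately have conj: "cnj ((w ^ j) ^ Suc k') = (w ^ j) ^ Suc r" for j
    using cnj_power_root_of_unity[of "w ^ j" "CARD('n)" k] \<open>k < CARD('n)\<close> Suc r by simp
  have "adj (mpow (pauli_unitary \<psi>) k)
      = (\<Sum>j<CARD('n). csmult (cnj ((w ^ j) ^ Suc k')) (ket_bra (\<psi> j) (\<psi> j)))"
    unfolding Suc pauli_unitary_power[OF onb] w_def[symmetric]
    by (simp only: adj_sum adj_csmult adj_ket_bra_self)
  also have "\<dots> = (\<Sum>j<CARD('n). csmult ((w ^ j) ^ Suc r) (ket_bra (\<psi> j) (\<psi> j)))"
    by (simp only: conj)
  also have "\<dots> = mpow (pauli_unitary \<psi>) ((CARD('n) - k) mod CARD('n))"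
    unfolding r(2) pauli_unitary_power[OF onb] w_def[symmetric] ..
  finally show ?thesis .
qed

lemma hs_selfadjoint_pauli_L:
  fixes \<psi> :: "nat \<Rightarrow> complex^'n::finite"
  assumes "orthonormal_basis \<psi>"
  shows "hs_selfadjoint (pauli_L (pauli_unitary \<psi>))"
proof -
  have twirl: "hs_selfadjoint
      (\<lambda>\<rho>. \<Sum>k<CARD('n). mpow (pauli_unitary \<psi>) k ** \<rho> ** adj (mpow (pauli_unitary \<psi>) k))"
    by (intro hs_selfadjoint_conjugation_sum adj_pauli_unitary_power assms) simp_all
  have "cnj (1 / of_nat CARD('n)) = (1 / of_nat CARD('n) :: complex)"
    by simp
  with twirl show ?thesis
    by (simp add: hs_selfadjoint_def pauli_L_def hs_inner_diff hs_inner_diff_left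
        hs_inner_csmult hs_inner_csmult_left)
qed

section \<open>Real eigenvalues of positive trace-preserving maps\<close>

definition entry_norm :: "'n::finite cmat \<Rightarrow> real" where
  "entry_norm H = (\<Sum>i\<in>UNIV. \<Sum>j\<in>UNIV. cmod (H $ i $ j))"

lemma cinner_add_left: "cinner (x + y) z = cinner x z + cinner y z"
  by (simp add: cinner_def sum.distrib distrib_right)

lemma cinner_add_right: "cinner z (x + y) = cinner z x + cinner z y"
  by (simp add: cinner_def sum.distrib distrib_left)

lemma cinner_axis_left: "cinner (axis i a) v = cnj a * v $ i"
proof -
  have "(\<Sum>l\<in>UNIV. cnj (axis i a $ l) * v $ l) = (\<Sum>l\<in>UNIV. if l = i then cnj a * v $ i else 0)"
    by (rule sum.cong) (auto simp: axis_def)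
  then show ?thesis
    by (simp add: cinner_def)
qed

lemma matrix_vector_mult_axis: "(Y *v axis j b) $ i = Y $ i $ j * b"
  by (simp add: matrix_vector_mult_def axis_def if_distrib cong: if_cong)

lemma cinner_self: "cinner x x = of_real ((norm x)\<^sup>2)"
proof -
  have "cinner x x = of_real (\<Sum>i\<in>UNIV. (cmod (x $ i))\<^sup>2)"
    unfolding cinner_def of_real_sum by (intro sum.cong refl) (metis complex_norm_square mult.commute)
  moreover have "(norm x)\<^sup>2 = (\<Sum>i\<in>UNIV. (cmod (x $ i))\<^sup>2)"
    by (simp add: norm_vec_def L2_set_def sum_nonneg)
  ultimately show ?thesis
    by simp
qed

lemma quadratic_form_axis:
  "cinner (axis i a) (Y *v axis i a) = cnj a * (Y $ i $ i * a)"
  by (simp add: cinner_axis_left matrix_vector_mult_axis)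

lemma quadratic_form_axis_pair:
  "cinner (axis i a + axis j b) (Y *v (axis i a + axis j b)) =
     cnj a * (Y $ i $ i * a) + cnj a * (Y $ i $ j * b) +
     cnj b * (Y $ j $ i * a) + cnj b * (Y $ j $ j * b)"
  by (simp add: cinner_add_left cinner_add_right matrix_vector_right_distrib cinner_axis_left
      matrix_vector_mult_axis)

lemma quadratic_form_add: "cinner x ((A + B) *v x) = cinner x (A *v x) + cinner x (B *v x)"
  by (simp add: matrix_vector_mult_add_rdistrib cinner_add_right)

lemma quadratic_form_diff: "cinner x ((A - B) *v x) = cinner x (A *v x) - cinner x (B *v x)"
  by (simp add: cinner_def matrix_vector_mult_def sum_subtractf right_diff_distrib left_diff_distrib)

lemma quadratic_form_csmult: "cinner x (csmult a A *v x) = a * cinner x (A *v x)"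
  by (simp add: cinner_def matrix_vector_mult_def sum_distrib_left mult_ac)

lemma quadratic_form_scaleR: "cinner x ((r *\<^sub>R A) *v x) = of_real r * cinner x (A *v x)"
  using quadratic_form_csmult[of x "of_real r" A] by (simp add: csmult_of_real)

lemma quadratic_form_mat: "cinner x (mat c *v x) = c * cinner x x"
proof -
  have "(mat c *v x) $ i = c * x $ i" for i
  proof -
    have "(\<Sum>j\<in>UNIV. mat c $ i $ j * x $ j) = (\<Sum>j\<in>UNIV. if j = i then c * x $ i else 0)"
      by (rule sum.cong) (auto simp: mat_def)
    then show ?thesis
      by (simp add: matrix_vector_mult_def)
  qed
  then show ?thesis
    by (simp add: cinner_def sum_distrib_left mult_ac)
qed

lemma quadratic_form_bound: "cmod (cinner x (H *v x)) \<le> entry_norm H * (norm x)\<^sup>2"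
proof -
  have "cmod (cinner x (H *v x)) \<le> (\<Sum>i\<in>UNIV. \<Sum>j\<in>UNIV. cmod (x $ i) * cmod (H $ i $ j) * cmod (x $ j))"
    unfolding cinner_def matrix_vector_mult_def
    by (rule order_trans[OF norm_sum sum_mono])
       (auto simp: norm_mult sum_distrib_left mult.assoc
         intro!: order_trans[OF norm_sum] mult_left_mono)
  also have "\<dots> \<le> (\<Sum>i\<in>UNIV. \<Sum>j\<in>UNIV. cmod (H $ i $ j) * (norm x)\<^sup>2)"
  proof (intro sum_mono)
    fix i j
    have "cmod (x $ i) * cmod (x $ j) \<le> (norm x)\<^sup>2"
      unfolding power2_eq_square
      by (intro mult_mono) (simp_all add: Finite_Cartesian_Product.norm_nth_le)
    then have "cmod (H $ i $ j) * (cmod (x $ i) * cmod (x $ j)) \<le> cmod (H $ i $ j) * (norm x)\<^sup>2"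
      by (rule mult_left_mono) simp
    then show "cmod (x $ i) * cmod (H $ i $ j) * cmod (x $ j) \<le> cmod (H $ i $ j) * (norm x)\<^sup>2"
      by (simp add: mult_ac)
  qed
  finally show ?thesis
    by (simp add: entry_norm_def sum_distrib_right)
qed

lemma psd_diag_real: "psd Y \<Longrightarrow> Y $ i $ i \<in> \<real>"
  unfolding psd_def by (metis adj_nth Reals_cnj_iff)

lemma psd_diag_nonneg: "psd Y \<Longrightarrow> 0 \<le> Re (Y $ i $ i)"
  unfolding psd_def using quadratic_form_axis[of i 1 Y] by (metis complex_cnj_one mult_1 mult_1_right)

lemma psd_offdiag_bound:
  assumes "psd Y" "i \<noteq> j"
  shows "2 * cmod (Y $ i $ j) \<le> Re (Y $ i $ i) + Re (Y $ j $ j)"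
proof (cases "Y $ i $ j = 0")
  case True
  then show ?thesis
    using psd_diag_nonneg[OF assms(1)] by (simp add: add_nonneg_nonneg)
next
  case False
  \<comment> \<open>test the quadratic form on \<open>e\<^sub>i + w e\<^sub>j\<close>, with the phase \<open>w\<close> that makes
      the cross terms negative\<close>
  define w where "w = - cnj (Y $ i $ j) / cmod (Y $ i $ j)"
  have Y_ji: "Y $ j $ i = cnj (Y $ i $ j)"
    using assms(1) unfolding psd_def by (metis adj_nth complex_cnj_cnj)
  have w1: "cnj w * w = 1" and cross: "Y $ i $ j * w = - cmod (Y $ i $ j)"
    using False by (simp_all add: w_def complex_norm_square[symmetric] field_simps power2_eq_square)
  then have cross': "cnj w * Y $ j $ i = - cmod (Y $ i $ j)"
    by (metis Y_ji complex_cnj_cnj complex_cnj_complex_of_real complex_cnj_minus complex_cnj_mult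
        mult.commute)
  have "0 \<le> Re (cinner (axis i 1 + axis j w) (Y *v (axis i 1 + axis j w)))"
    using assms(1) by (simp add: psd_def)
  also have "cinner (axis i 1 + axis j w) (Y *v (axis i 1 + axis j w))
      = Y $ i $ i + Y $ i $ j * w + cnj w * Y $ j $ i + (cnj w * w) * Y $ j $ j"
    by (simp add: quadratic_form_axis_pair mult_ac)
  also have "\<dots> = Y $ i $ i - 2 * cmod (Y $ i $ j) + Y $ j $ j"
    using cross cross' w1 by simp
  finally show ?thesis
    by simp
qed

lemma psd_entry_le_trace:
  assumes "psd Y"
  shows "cmod (Y $ i $ j) \<le> Re (trace Y)"
proof -
  have diag: "Re (Y $ k $ k) \<le> Re (trace Y)" for k
    unfolding trace_def Re_sum using psd_diag_nonneg[OF assms] by (intro member_le_sum) auto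
  show ?thesis
  proof (cases "i = j")
    case True
    then show ?thesis
      using diag[of i] psd_diag_real[OF assms, of i] psd_diag_nonneg[OF assms, of i]
      by (metis Reals_cases Re_complex_of_real norm_of_real abs_of_nonneg)
  next
    case False
    then show ?thesis
      using psd_offdiag_bound[OF assms False] diag[of i] diag[of j] by linarith
  qed
qed

lemma psd_entry_norm_le_trace:
  fixes Y :: "'n::finite cmat"
  assumes "psd Y"
  shows "entry_norm Y \<le> (real CARD('n))\<^sup>2 * Re (trace Y)"
proof -
  have "entry_norm Y \<le> (\<Sum>i\<in>(UNIV::'n set). \<Sum>j\<in>(UNIV::'n set). Re (trace Y))"
    unfolding entry_norm_def by (intro sum_mono psd_entry_le_trace assms)
  then show ?thesis
    by (simp add: power2_eq_square)
qed

lemma psd_mat_plus_minus_hermitian: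
  assumes H: "adj H = H" and c: "entry_norm H \<le> c"
  shows "psd (mat (of_real c) + H)" "psd (mat (of_real c) - H)"
proof -
  have bound: "\<bar>Re (cinner x (H *v x))\<bar> \<le> c * (norm x)\<^sup>2" for x
    using abs_Re_le_cmod[of "cinner x (H *v x)"] quadratic_form_bound[of x H]
      mult_right_mono[OF c, of "(norm x)\<^sup>2"] by simp
  have "0 \<le> Re (cinner x ((mat (of_real c) + H) *v x))" "0 \<le> Re (cinner x ((mat (of_real c) - H) *v x))"
    for x
    using bound[of x]
    by (simp_all add: quadratic_form_add quadratic_form_diff quadratic_form_mat cinner_self)
  then show "psd (mat (of_real c) + H)" "psd (mat (of_real c) - H)"
    by (simp_all add: psd_def adj_add adj_diff adj_mat_of_real H)
qed

lemma psd_mat_1: "psd (mat 1)"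
  using psd_mat_plus_minus_hermitian(1)[of 0 1] by (simp add: entry_norm_def)

lemma mat_of_real_eq_csmult: "mat (of_real c) = csmult (of_real c) (mat 1)"
  by (simp add: vec_eq_iff mat_def)

lemma clinear_map_add: "clinear_map V \<Longrightarrow> V (X + Y) = V X + V Y"
  by (simp add: clinear_map_def)

lemma clinear_map_csmult: "clinear_map V \<Longrightarrow> V (csmult c X) = csmult c (V X)"
  by (simp add: clinear_map_def)

lemma clinear_map_scaleR: "clinear_map V \<Longrightarrow> V (r *\<^sub>R X) = r *\<^sub>R V X"
  by (simp add: clinear_map_csmult flip: csmult_of_real)

lemma clinear_map_diff:
  fixes V :: "'n::finite supop"
  assumes "clinear_map V"
  shows "V (X - Y) = V X - V Y"
proof -
  have diff: "A - B = A + csmult (-1) B" for A B :: "'n cmat"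
    by (simp add: vec_eq_iff)
  show ?thesis
    using assms by (simp only: diff clinear_map_add clinear_map_csmult)
qed

lemma positive_map_hermitian:
  assumes V: "clinear_map V" "positive_map V" and H: "adj H = H"
  shows "adj (V H) = V H"
proof -
  define c where "c = entry_norm H"
  have herm: "adj (V (mat (of_real c) + H)) = V (mat (of_real c) + H)" "adj (V (mat 1)) = V (mat 1)"
    using psd_mat_plus_minus_hermitian(1)[OF H] psd_mat_1 V(2)
    unfolding positive_map_def psd_def c_def by auto
  have "V (mat (of_real c)) = csmult (of_real c) (V (mat 1))"
    by (simp only: mat_of_real_eq_csmult clinear_map_csmult[OF V(1)])
  then have "V H = V (mat (of_real c) + H) - csmult (of_real c) (V (mat 1))"
    by (simp add: clinear_map_add[OF V(1)])
  then show ?thesis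
    using herm by (simp add: adj_diff adj_csmult)
qed

lemma positive_map_adj:
  assumes V: "clinear_map V" "positive_map V"
  shows "V (adj X) = adj (V X)"
proof -
  define H1 where "H1 = csmult (1/2) (X + adj X)"
  define H2 where "H2 = csmult (-\<i>/2) (X - adj X)"
  have "adj H1 = H1" "adj H2 = H2"
    by (simp_all add: H1_def H2_def vec_eq_iff field_simps)
  then have herm: "adj (V H1) = V H1" "adj (V H2) = V H2"
    using positive_map_hermitian[OF V] by blast+
  have "X = H1 + csmult \<i> H2" "adj X = H1 + csmult (-\<i>) H2"
    by (simp_all add: H1_def H2_def vec_eq_iff field_simps)
  then show ?thesis
    using herm by (metis V(1) adj_add adj_csmult clinear_map_add clinear_map_csmult complex_cnj_i)
qed

lemma positive_trace_preserving_funpow: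
  assumes "clinear_map V" "positive_map V" "trace_preserving V"
  shows "clinear_map (V ^^ n) \<and> positive_map (V ^^ n) \<and> trace_preserving (V ^^ n)"
  by (induction n) (use assms in \<open>simp_all add: clinear_map_def positive_map_def trace_preserving_def\<close>)

lemma positive_trace_preserving_quadratic_form_bound:
  fixes H :: "'n::finite cmat"
  assumes W: "clinear_map W" "positive_map W" "trace_preserving W" and H: "adj H = H"
  shows "\<bar>Re (cinner x (W H *v x))\<bar> \<le> entry_norm H * ((real CARD('n))\<^sup>2 * CARD('n)) * (norm x)\<^sup>2"
proof -
  \<comment> \<open>\<open>-c I \<le> H \<le> c I\<close> is preserved by \<open>W\<close>, and \<open>W I\<close> is positive with trace \<open>CARD('n)\<close>\<close>
  define c where "c = entry_norm H"
  define Y where "Y = W (mat 1)"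
  have c0: "0 \<le> c"
    by (simp add: c_def entry_norm_def sum_nonneg)
  have "W (mat (of_real c) + H) = csmult (of_real c) Y + W H"
    "W (mat (of_real c) - H) = csmult (of_real c) Y - W H"
    by (simp_all only: Y_def mat_of_real_eq_csmult clinear_map_add[OF W(1)] clinear_map_diff[OF W(1)]
        clinear_map_csmult[OF W(1)])
  moreover have "psd (W (mat (of_real c) + H))" "psd (W (mat (of_real c) - H))"
    using psd_mat_plus_minus_hermitian[OF H, of c] W(2) by (simp_all add: positive_map_def c_def)
  ultimately have "psd (csmult (of_real c) Y + W H)" "psd (csmult (of_real c) Y - W H)"
    by simp_all
  then have "0 \<le> c * Re (cinner x (Y *v x)) + Re (cinner x (W H *v x))"
    "0 \<le> c * Re (cinner x (Y *v x)) - Re (cinner x (W H *v x))"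
    unfolding psd_def by (simp_all add: quadratic_form_add quadratic_form_diff quadratic_form_csmult)
  then have "\<bar>Re (cinner x (W H *v x))\<bar> \<le> c * Re (cinner x (Y *v x))"
    by linarith
  also have "\<dots> \<le> c * (entry_norm Y * (norm x)\<^sup>2)"
    using c0 quadratic_form_bound[of x Y] complex_Re_le_cmod
    by (blast intro: mult_left_mono order_trans)
  also have "\<dots> \<le> c * ((real CARD('n))\<^sup>2 * CARD('n) * (norm x)\<^sup>2)"
  proof -
    have "psd Y" and "trace Y = of_nat CARD('n)"
      using W psd_mat_1 by (auto simp: Y_def positive_map_def trace_preserving_def trace_I)
    then have "entry_norm Y \<le> (real CARD('n))\<^sup>2 * CARD('n)"
      using psd_entry_norm_le_trace by fastforce
    then show ?thesis
      using c0 by (simp add: mult_left_mono mult_right_mono)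
  qed
  finally show ?thesis
    by (simp add: c_def mult_ac)
qed

lemma hermitian_nonzero_quadratic_form:
  assumes H: "adj H = H" and "H \<noteq> 0"
  obtains x where "Re (cinner x (H *v x)) \<noteq> 0"
proof (cases "\<exists>k. H $ k $ k \<noteq> 0")
  case True
  then obtain k where k: "H $ k $ k \<noteq> 0"
    by blast
  have "H $ k $ k \<in> \<real>"
    using H by (metis adj_nth Reals_cnj_iff)
  then have "Re (cinner (axis k 1) (H *v axis k 1)) \<noteq> 0"
    using k by (auto simp: quadratic_form_axis elim!: Reals_cases)
  then show ?thesis
    by (rule that)
next
  case False
  obtain i j where ij: "H $ i $ j \<noteq> 0"
    using \<open>H \<noteq> 0\<close> by (metis vec_eq_iff zero_index)
  have "H $ j $ i = cnj (H $ i $ j)"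
    using H by (metis adj_nth complex_cnj_cnj)
  then have "cinner (axis i 1 + axis j (cnj (H $ i $ j))) (H *v (axis i 1 + axis j (cnj (H $ i $ j))))
      = 2 * (H $ i $ j * cnj (H $ i $ j))"
    using False by (simp add: quadratic_form_axis_pair mult.commute)
  also have "Re \<dots> = 2 * (cmod (H $ i $ j))\<^sup>2"
    unfolding cmod_power2 by (simp add: power2_eq_square)
  finally show ?thesis
    using ij by (intro that[of "axis i 1 + axis j (cnj (H $ i $ j))"]) simp
qed

lemma positive_trace_preserving_hermitian_eigenvalue_le_1:
  assumes V: "clinear_map V" "positive_map V" "trace_preserving V"
    and H: "adj H = H" "H \<noteq> 0" and eig: "V H = \<mu> *\<^sub>R H"
  shows "\<mu> \<le> 1"
proof (rule ccontr)
  assume "\<not> \<mu> \<le> 1"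
  obtain x where x: "Re (cinner x (H *v x)) \<noteq> 0"
    using hermitian_nonzero_quadratic_form[OF H] by blast
  define q where "q = \<bar>Re (cinner x (H *v x))\<bar>"
  define B where "B = entry_norm H * ((real CARD('a))\<^sup>2 * CARD('a)) * (norm x)\<^sup>2"
  have bound: "\<mu> ^ n * q \<le> B" for n
  proof -
    have "(V ^^ n) H = (\<mu> ^ n) *\<^sub>R H"
      by (induction n) (simp_all add: eig clinear_map_scaleR[OF V(1)])
    moreover have "clinear_map (V ^^ n)" "positive_map (V ^^ n)" "trace_preserving (V ^^ n)"
      using positive_trace_preserving_funpow[OF V] by auto
    ultimately have "\<bar>\<mu> ^ n * Re (cinner x (H *v x))\<bar> \<le> B"
      using positive_trace_preserving_quadratic_form_bound[of "V ^^ n" H x] H(1)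
      by (simp add: B_def quadratic_form_scaleR)
    then show ?thesis
      using \<open>\<not> \<mu> \<le> 1\<close> by (simp add: q_def abs_mult)
  qed
  obtain n where "B / q < \<mu> ^ n"
    using real_arch_pow[of \<mu> "B / q"] \<open>\<not> \<mu> \<le> 1\<close> by auto
  then have "B < \<mu> ^ n * q"
    using x by (simp add: q_def divide_less_eq)
  with bound[of n] show False
    by simp
qed

lemma positive_trace_preserving_real_eigenvalue_le_1:
  assumes V: "clinear_map V" "positive_map V" "trace_preserving V"
    and "X \<noteq> 0" and eig: "V X = \<mu> *\<^sub>R X"
  shows "\<mu> \<le> 1"
proof -
  \<comment> \<open>\<open>V\<close> commutes with the adjoint, so the Hermitian parts of \<open>X\<close> are eigenvectors as well\<close>
  have eig': "V (adj X) = \<mu> *\<^sub>R adj X"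
    using positive_map_adj[OF V(1,2)] eig by (simp add: adj_scaleR)
  define H1 where "H1 = X + adj X"
  define H2 where "H2 = csmult \<i> (X - adj X)"
  have herm: "adj H1 = H1" "adj H2 = H2"
    by (simp_all add: H1_def H2_def adj_add adj_diff adj_csmult add.commute)
       (simp add: vec_eq_iff algebra_simps)
  have "V H1 = \<mu> *\<^sub>R H1" "V H2 = \<mu> *\<^sub>R H2"
    by (simp_all add: H1_def H2_def clinear_map_add[OF V(1)] clinear_map_diff[OF V(1)]
        clinear_map_csmult[OF V(1)] eig eig' csmult_scaleR flip: scaleR_add_right scaleR_diff_right)
  moreover have "X = csmult (1/2) H1 + csmult (- \<i> / 2) H2"
    by (simp add: H1_def H2_def vec_eq_iff field_simps)
  then have "H1 \<noteq> 0 \<or> H2 \<noteq> 0"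
    using \<open>X \<noteq> 0\<close> by auto
  ultimately show ?thesis
    using positive_trace_preserving_hermitian_eigenvalue_le_1[OF V] herm by blast
qed

section \<open>Calculus on the half-line\<close>

lemma integral_has_vector_derivative_atLeast:
  fixes f :: "real \<Rightarrow> 'a::banach"
  assumes "continuous_on {a..} f" and "a \<le> t"
  shows "((\<lambda>u. integral {a..u} f) has_vector_derivative f t) (at t within {a..})"
proof -
  have "at t within {a..} = at t within {a..t + 1}"
    by (rule at_within_nhd[where S="{..<t + 1}"]) auto
  moreover have "continuous_on {a..t + 1} f"
    using assms(1) by (rule continuous_on_subset) auto
  ultimately show ?thesis
    using integral_has_vector_derivative[of a "t + 1" f t] assms(2) by simp
qed

lemma has_vector_derivative_exp_integral:
  fixes m :: "real \<Rightarrow> complex"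
  assumes "continuous_on {0..} m" and "0 \<le> t"
  shows "((\<lambda>u. exp (integral {0..u} m)) has_vector_derivative m t * exp (integral {0..t} m))
    (at t within {0..})"
proof -
  have "((exp \<circ> (\<lambda>u. integral {0..u} m)) has_vector_derivative m t * exp (integral {0..t} m))
      (at t within {0..})"
    using integral_has_vector_derivative_atLeast[OF assms]
    by (rule field_vector_diff_chain_within) (auto intro: DERIV_exp has_field_derivative_at_within)
  then show ?thesis
    by (simp add: o_def)
qed

lemma integral_of_real_continuous:
  fixes f :: "real \<Rightarrow> real"
  assumes "continuous_on {0..t} f"
  shows "integral {0..t} (\<lambda>s. complex_of_real (f s)) = of_real (integral {0..t} f)"
  by (rule integral_unique[OF has_integral_of_real[where 'b=complex,
        OF integrable_integral[OF integrable_continuous_real[OF assms]]]])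

lemma linear_scalar_ode_solution:
  fixes m c :: "real \<Rightarrow> complex"
  assumes m: "continuous_on {0..} m"
    and c': "\<And>t. 0 \<le> t \<Longrightarrow> (c has_vector_derivative m t * c t) (at t within {0..})"
    and "0 \<le> t"
  shows "c t = exp (integral {0..t} m) * c 0"
proof -
  define E where "E = (\<lambda>u. exp (- integral {0..u} m))"
  have "((\<lambda>u. c u * E u) has_vector_derivative 0) (at u within {0..})" if "0 \<le> u" for u
  proof -
    have "(E has_vector_derivative - m u * E u) (at u within {0..})"
      using has_vector_derivative_exp_integral[of "\<lambda>s. - m s" u] m that
      by (simp add: E_def continuous_on_minus)
    from has_vector_derivative_mult[OF c'[OF that] this] show ?thesis
      by (simp add: algebra_simps)
  qed
  then obtain k where "\<And>u. u \<in> {0..} \<Longrightarrow> c u * E u = k"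
    using has_vector_derivative_zero_constant[of "{0..}" "\<lambda>u. c u * E u"] by auto
  then have "c t * E t = c 0 * E 0"
    using \<open>0 \<le> t\<close> by simp
  then show ?thesis
    by (simp add: E_def exp_minus field_simps)
qed

lemma antimono_has_real_derivative_nonpos:
  fixes f :: "real \<Rightarrow> real"
  assumes f': "(f has_real_derivative D) (at t within {a..b})" and "t \<in> {a..b}" "a < b"
    and anti: "\<And>x y. x \<in> {a..b} \<Longrightarrow> y \<in> {a..b} \<Longrightarrow> x \<le> y \<Longrightarrow> f y \<le> f x"
  shows "D \<le> 0"
proof (rule tendsto_upperbound)
  show "((\<lambda>y. (f y - f t) / (y - t)) \<longlongrightarrow> D) (at t within {a..b})"
    using f' by (simp add: has_field_derivative_iff)
  show "at t within {a..b} \<noteq> bot"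
    using assms(2,3) by (simp add: trivial_limit_within islimpt_Icc)
  have "(f y - f t) / (y - t) \<le> 0" if "y \<in> {a..b}" "y \<noteq> t" for y
    using anti[of y t] anti[of t y] that \<open>t \<in> {a..b}\<close>
    by (cases "y < t") (auto simp: divide_nonneg_neg divide_nonpos_pos)
  then show "\<forall>\<^sub>F y in at t within {a..b}. (f y - f t) / (y - t) \<le> 0"
    by (auto simp: eventually_at_filter)
qed

lemma integral_reflect_Icc:
  fixes f :: "real \<Rightarrow> 'a::banach"
  assumes "f integrable_on {0..t}"
  shows "integral {0..t} (\<lambda>s. f (t - s)) = integral {0..t} f"
proof -
  obtain i where i: "(f has_integral i) (cbox 0 t)"
    using assms by (auto simp: integrable_on_def)
  have "((\<lambda>x. f ((-1) *\<^sub>R x + t)) has_integral (1 / \<bar>-1\<bar> ^ DIM(real)) *\<^sub>R i)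
      ((\<lambda>x. (1 / (-1)) *\<^sub>R x + - ((1 / (-1)) *\<^sub>R t)) ` cbox 0 t)"
    by (rule has_integral_affinity[OF i]) simp
  moreover have "(\<lambda>x::real. (1 / (-1)) *\<^sub>R x + - ((1 / (-1)) *\<^sub>R t)) ` cbox 0 t = {0..t}"
    by (auto simp: image_iff intro!: bexI[where x="t - _"])
  ultimately have "((\<lambda>s. f (t - s)) has_integral i) {0..t}"
    by simp
  then show ?thesis
    using i by (simp add: integral_unique)
qed

lemma volterra_cumulative_kernel_nonpos:
  fixes \<eta> k :: "real \<Rightarrow> real"
  assumes \<eta>0: "\<eta> 0 = 1" and pos: "\<And>t. t \<in> {0..T} \<Longrightarrow> 0 < \<eta> t"
    and anti: "\<And>s t. s \<in> {0..T} \<Longrightarrow> t \<in> {0..T} \<Longrightarrow> s \<le> t \<Longrightarrow> \<eta> t \<le> \<eta> s"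
    and k: "k integrable_on {0..T}"
    and \<eta>': "\<And>t. t \<in> {0..T} \<Longrightarrow>
      (\<eta> has_real_derivative integral {0..t} (\<lambda>r. \<eta> (t - r) * k r)) (at t within {0..T})"
  shows "integral {0..T} k \<le> 0"
proof (cases "0 < T")
  case False
  then show ?thesis
    by (cases "T = 0") simp_all
next
  case True
  define K where "K = (\<lambda>t. integral {0..t} k)"
  have "continuous_on {0..T} K"
    unfolding K_def by (rule indefinite_integral_continuous_1[OF k])
  then obtain s where s: "s \<in> {0..T}" and s_max: "\<And>u. u \<in> {0..T} \<Longrightarrow> K u \<le> K s"
    using continuous_attains_sup[of "{0..T}" K] True by auto
  have "K s \<le> 0"
  proof (rule ccontr)
    assume "\<not> K s \<le> 0"
    have k_s: "k integrable_on {0..s}"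
      by (rule integrable_subinterval_real[OF k]) (use s in auto)
    \<comment> \<open>Bonnet's mean value theorem for the nondecreasing weight \<open>r \<mapsto> \<eta> (s - r)\<close>; the
        maximality of \<open>K s\<close> then bounds the convolution below by \<open>\<eta> s * K s > 0\<close>\<close>
    obtain c where c: "c \<in> {0..s}"
      and bonnet: "integral {0..s} (\<lambda>r. \<eta> (s - r) * k r) = \<eta> s * K c + \<eta> 0 * integral {c..s} k"
      using second_mean_value_theorem[OF k_s, of "\<lambda>r. \<eta> (s - r)"] s anti
      by (auto simp: K_def)
    have "integral {c..s} k = K s - K c"
      using Henstock_Kurzweil_Integration.integral_combine[of 0 c s k] c k_s by (simp add: K_def)
    moreover have "integral {0..s} (\<lambda>r. \<eta> (s - r) * k r) \<le> 0"
      by (rule antimono_has_real_derivative_nonpos[OF \<eta>'[OF s] s True anti]) auto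
    moreover have "(1 - \<eta> s) * K c \<le> (1 - \<eta> s) * K s"
      using anti[of 0 s] s c s_max[of c] \<eta>0 by (intro mult_left_mono) auto
    moreover have "0 < \<eta> s * K s"
      using pos[OF s] \<open>\<not> K s \<le> 0\<close> by simp
    ultimately show False
      using bonnet \<eta>0 by (simp add: algebra_simps)
  qed
  then show ?thesis
    using s_max[of T] True by (simp add: K_def)
qed

section \<open>Generators with a time-independent eigenbasis\<close>

definition biorthogonal :: "'i set \<Rightarrow> ('i \<Rightarrow> 'n::finite cmat) \<Rightarrow> ('i \<Rightarrow> 'n cmat) \<Rightarrow> bool" where
  "biorthogonal A \<sigma> \<tau> \<longleftrightarrow> (\<forall>\<alpha>\<in>A. \<forall>\<beta>\<in>A. hs_inner (\<sigma> \<alpha>) (\<tau> \<beta>) = (if \<alpha> = \<beta> then 1 else 0))"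

definition eigen_expansion ::
    "'i set \<Rightarrow> ('i \<Rightarrow> complex) \<Rightarrow> ('i \<Rightarrow> 'n::finite cmat) \<Rightarrow> ('i \<Rightarrow> 'n cmat) \<Rightarrow> 'n supop" where
  "eigen_expansion A m \<sigma> \<tau> \<omega> = (\<Sum>\<alpha>\<in>A. csmult (m \<alpha>) (rank1_map (\<sigma> \<alpha>) (\<tau> \<alpha>) \<omega>))"

lemma eigen_expansion_alt:
  "eigen_expansion A m \<sigma> \<tau> \<omega> = (\<Sum>\<alpha>\<in>A. csmult (m \<alpha> * hs_inner (\<sigma> \<alpha>) \<omega>) (\<tau> \<alpha>))"
  by (simp add: eigen_expansion_def rank1_map_def)

lemma biorthogonal_nonzero:
  assumes "biorthogonal A \<sigma> \<tau>" "\<beta> \<in> A"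
  shows "\<tau> \<beta> \<noteq> 0"
proof
  assume "\<tau> \<beta> = 0"
  then have "hs_inner (\<sigma> \<beta>) (\<tau> \<beta>) = 0"
    by simp
  with assms show False
    by (simp add: biorthogonal_def)
qed

lemma hs_inner_eigen_expansion:
  assumes "finite A" "biorthogonal A \<sigma> \<tau>" "\<beta> \<in> A"
  shows "hs_inner (\<sigma> \<beta>) (eigen_expansion A m \<sigma> \<tau> \<omega>) = m \<beta> * hs_inner (\<sigma> \<beta>) \<omega>"
proof -
  have "hs_inner (\<sigma> \<beta>) (eigen_expansion A m \<sigma> \<tau> \<omega>)
      = (\<Sum>\<alpha>\<in>A. if \<alpha> = \<beta> then m \<beta> * hs_inner (\<sigma> \<beta>) \<omega> else 0)"
    using assms(2,3) unfolding eigen_expansion_alt biorthogonal_def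
    by (auto simp: hs_inner_sum hs_inner_csmult intro!: sum.cong)
  then show ?thesis
    using assms(1,3) by simp
qed

lemma eigen_expansion_eigenvector:
  assumes "finite A" "biorthogonal A \<sigma> \<tau>" "\<beta> \<in> A"
  shows "eigen_expansion A m \<sigma> \<tau> (\<tau> \<beta>) = csmult (m \<beta>) (\<tau> \<beta>)"
proof -
  have "eigen_expansion A m \<sigma> \<tau> (\<tau> \<beta>) = (\<Sum>\<alpha>\<in>A. if \<alpha> = \<beta> then csmult (m \<beta>) (\<tau> \<beta>) else 0)"
    using assms(2,3) unfolding eigen_expansion_alt biorthogonal_def by (auto intro!: sum.cong)
  then show ?thesis
    using assms(1,3) by simp
qed

lemma eigen_expansion_eq_0:
  "(\<And>\<alpha>. \<alpha> \<in> A \<Longrightarrow> hs_inner (\<sigma> \<alpha>) \<omega> = 0) \<Longrightarrow> eigen_expansion A m \<sigma> \<tau> \<omega> = 0"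
  by (simp add: eigen_expansion_alt)

lemma eigen_expansion_coefficient:
  assumes "finite A" "biorthogonal A \<sigma> \<tau>" "\<beta> \<in> A"
  shows "hs_inner (\<sigma> \<beta>) (eigen_expansion A m \<sigma> \<tau> (\<tau> \<beta>)) = m \<beta>"
  using hs_inner_eigen_expansion[OF assms] assms(2,3) by (simp add: biorthogonal_def)

lemma eigen_expansion_eigenvalue_real:
  assumes "hs_selfadjoint (eigen_expansion A m \<sigma> \<tau>)" "finite A" "biorthogonal A \<sigma> \<tau>" "\<beta> \<in> A"
  shows "m \<beta> \<in> \<real>"
  using hs_selfadjoint_eigenvalue_real[OF assms(1) eigen_expansion_eigenvector[OF assms(2-4)]
      biorthogonal_nonzero[OF assms(3,4)]] .

lemma clinear_map_eigen_expansion: "clinear_map (eigen_expansion A m \<sigma> \<tau>)"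
  by (simp add: clinear_map_def eigen_expansion_alt hs_inner_add hs_inner_csmult distrib_left
      csmult_add_left sum.distrib csmult_sum mult_ac)

lemma eigen_expansion_ode_coordinate:
  fixes y :: "real \<Rightarrow> 'n::finite cmat"
  assumes A: "finite A" "biorthogonal A \<sigma> \<tau>"
    and K: "\<And>t. 0 \<le> t \<Longrightarrow> K t = eigen_expansion A (\<lambda>\<alpha>. m \<alpha> t) \<sigma> \<tau>"
    and m: "continuous_on {0..} (m \<alpha>)"
    and y': "\<And>t. 0 \<le> t \<Longrightarrow> (y has_vector_derivative K t (y t)) (at t within {0..})"
    and "\<alpha> \<in> A" "0 \<le> t"
  shows "hs_inner (\<sigma> \<alpha>) (y t) = exp (integral {0..t} (m \<alpha>)) * hs_inner (\<sigma> \<alpha>) (y 0)"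
proof (rule linear_scalar_ode_solution[OF m _ \<open>0 \<le> t\<close>])
  fix u :: real
  assume "0 \<le> u"
  from bounded_linear.has_vector_derivative[OF bounded_linear_hs_inner[of "\<sigma> \<alpha>"] y'[OF this]]
  show "((\<lambda>u. hs_inner (\<sigma> \<alpha>) (y u)) has_vector_derivative m \<alpha> u * hs_inner (\<sigma> \<alpha>) (y u))
      (at u within {0..})"
    by (simp add: K[OF \<open>0 \<le> u\<close>] hs_inner_eigen_expansion[OF A \<open>\<alpha> \<in> A\<close>])
qed

lemma eigen_expansion_ode_solution:
  fixes y :: "real \<Rightarrow> 'n::finite cmat"
  assumes A: "finite A" "biorthogonal A \<sigma> \<tau>"
    and K: "\<And>t. 0 \<le> t \<Longrightarrow> K t = eigen_expansion A (\<lambda>\<alpha>. m \<alpha> t) \<sigma> \<tau>"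
    and m: "\<And>\<alpha>. \<alpha> \<in> A \<Longrightarrow> continuous_on {0..} (m \<alpha>)"
    and y': "\<And>t. 0 \<le> t \<Longrightarrow> (y has_vector_derivative K t (y t)) (at t within {0..})"
    and \<beta>: "\<beta> \<in> A" and y0: "y 0 = \<tau> \<beta>" and "0 \<le> t"
  shows "y t = csmult (exp (integral {0..t} (m \<beta>))) (\<tau> \<beta>)"
proof -
  define E where "E = (\<lambda>u. exp (integral {0..u} (m \<beta>)))"
  define z where "z = (\<lambda>u. y u - csmult (E u) (\<tau> \<beta>))"
  \<comment> \<open>all coordinates of \<open>z\<close> vanish, so \<open>z\<close> is annihilated by the generator and hence constant\<close>
  have Kz: "K u (z u) = 0" if "0 \<le> u" for u
  proof -
    have "hs_inner (\<sigma> \<alpha>) (z u) = 0" if "\<alpha> \<in> A" for \<alpha>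
      using A(2) \<beta> that eigen_expansion_ode_coordinate[OF A K m y' that \<open>0 \<le> u\<close>]
      by (auto simp: z_def E_def y0 biorthogonal_def hs_inner_diff hs_inner_csmult)
    then show ?thesis
      by (simp add: K[OF that] eigen_expansion_eq_0)
  qed
  have "(z has_vector_derivative 0) (at u within {0..})" if "0 \<le> u" for u
  proof -
    have "((\<lambda>u. csmult (E u) (\<tau> \<beta>)) has_vector_derivative csmult (m \<beta> u * E u) (\<tau> \<beta>))
        (at u within {0..})"
      using bounded_linear.has_vector_derivative[OF bounded_linear_csmult_left
          has_vector_derivative_exp_integral[OF m[OF \<beta>] that]]
      by (simp add: E_def)
    moreover have "csmult (m \<beta> u * E u) (\<tau> \<beta>) = K u (csmult (E u) (\<tau> \<beta>))"
      using K[OF that] eigen_expansion_eigenvector[OF A \<beta>]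
      by (simp add: clinear_map_csmult[OF clinear_map_eigen_expansion] mult.commute)
    ultimately have "(z has_vector_derivative K u (y u) - K u (csmult (E u) (\<tau> \<beta>))) (at u within {0..})"
      unfolding z_def using y'[OF that] by (intro has_vector_derivative_diff) simp_all
    then show ?thesis
      using Kz[OF that] K[OF that] by (simp add: z_def clinear_map_diff[OF clinear_map_eigen_expansion])
  qed
  then obtain k where "\<And>u. u \<in> {0..} \<Longrightarrow> z u = k"
    using has_vector_derivative_zero_constant[of "{0..}" z] by auto
  then have "z t = z 0"
    using \<open>0 \<le> t\<close> by simp
  then show ?thesis
    by (simp add: z_def E_def y0)
qed

lemma selfadjoint_generator_eigenmode_evolution:
  fixes K \<Lambda> :: "real \<Rightarrow> 'n::finite supop"
  assumes A: "finite A" "biorthogonal A \<sigma> \<tau>"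
    and K: "\<And>t. 0 \<le> t \<Longrightarrow> K t = eigen_expansion A (\<lambda>\<alpha>. m \<alpha> t) \<sigma> \<tau>"
    and K_sa: "\<And>t. hs_selfadjoint (K t)"
    and K_cont: "\<And>X Y. continuous_on {0..} (\<lambda>t. hs_inner X (K t Y))"
    and \<Lambda>0: "\<Lambda> 0 = id"
    and \<Lambda>': "\<And>t \<rho>. 0 \<le> t \<Longrightarrow> ((\<lambda>s. \<Lambda> s \<rho>) has_vector_derivative K t (\<Lambda> t \<rho>)) (at t within {0..})"
    and \<beta>: "\<beta> \<in> A" and "0 \<le> t"
  shows "\<Lambda> t (\<tau> \<beta>) = exp (integral {0..t} (\<lambda>s. Re (m \<beta> s))) *\<^sub>R \<tau> \<beta>"
proof -
  have m_cont: "continuous_on {0..} (m \<alpha>)" if "\<alpha> \<in> A" for \<alpha>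
  proof (rule continuous_on_cong[THEN iffD1])
    show "hs_inner (\<sigma> \<alpha>) (K t (\<tau> \<alpha>)) = m \<alpha> t" if "t \<in> {0..}" for t
      using that eigen_expansion_coefficient[OF A \<open>\<alpha> \<in> A\<close>] by (simp add: K)
  qed (auto intro: K_cont)
  have m_real: "m \<beta> s = of_real (Re (m \<beta> s))" if "0 \<le> s" for s
    using eigen_expansion_eigenvalue_real[OF K_sa[of s, unfolded K[OF that]] A \<beta>]
    by (simp add: of_real_Re)
  have "\<Lambda> t (\<tau> \<beta>) = csmult (exp (integral {0..t} (m \<beta>))) (\<tau> \<beta>)"
    using eigen_expansion_ode_solution[OF A K m_cont \<Lambda>' \<beta> _ \<open>0 \<le> t\<close>] \<Lambda>0 by simp
  also have "integral {0..t} (m \<beta>) = integral {0..t} (\<lambda>s. of_real (Re (m \<beta> s)))"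
    using m_real by (intro integral_cong) simp
  also have "\<dots> = of_real (integral {0..t} (\<lambda>s. Re (m \<beta> s)))"
    using m_cont[OF \<beta>]
    by (intro integral_of_real_continuous continuous_on_Re) (auto intro: continuous_on_subset)
  finally show ?thesis
    by (simp add: csmult_of_real exp_of_real)
qed

section \<open>P-divisibility and the Nakajima--Zwanzig equation\<close>

lemma P_divisible_eigenmode_antimono:
  assumes "P_divisible \<Lambda>" "X \<noteq> 0"
    and evol: "\<And>t. 0 \<le> t \<Longrightarrow> \<Lambda> t X = \<eta> t *\<^sub>R X" and pos: "\<And>t. 0 \<le> t \<Longrightarrow> 0 < \<eta> t"
    and "0 \<le> s" "s \<le> t"
  shows "\<eta> t \<le> \<eta> s"
proof -
  obtain V where V: "clinear_map V" "positive_map V" "trace_preserving V" and "\<Lambda> t = V \<circ> \<Lambda> s"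
    using assms(1,5,6) unfolding P_divisible_def by blast
  then have "\<eta> t *\<^sub>R X = V (\<Lambda> s X)"
    using evol[of t] \<open>0 \<le> s\<close> \<open>s \<le> t\<close> by simp
  also have "\<dots> = \<eta> s *\<^sub>R V X"
    using evol[OF \<open>0 \<le> s\<close>] by (simp add: clinear_map_scaleR[OF V(1)])
  finally have "(1 / \<eta> s) *\<^sub>R (\<eta> s *\<^sub>R V X) = (1 / \<eta> s) *\<^sub>R (\<eta> t *\<^sub>R X)"
    by simp
  then have "V X = (\<eta> t / \<eta> s) *\<^sub>R X"
    using pos[OF \<open>0 \<le> s\<close>] by simp
  then have "\<eta> t / \<eta> s \<le> 1"
    by (rule positive_trace_preserving_real_eigenvalue_le_1[OF V \<open>X \<noteq> 0\<close>])
  then show ?thesis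
    using pos[OF \<open>0 \<le> s\<close>] by (simp add: divide_le_eq_1)
qed

lemma nakajima_zwanzig_eigenmode_derivative:
  fixes KNZ :: "real \<Rightarrow> 'n::finite supop" and h :: "'n cmat \<Rightarrow> real"
  assumes lin: "\<And>t. clinear_map (KNZ t)" and h: "bounded_linear h" "h X = 1"
    and evol: "\<And>s. 0 \<le> s \<Longrightarrow> \<Lambda> s X = \<eta> s *\<^sub>R X"
    and int: "(\<lambda>s. KNZ (t - s) (\<Lambda> s X)) integrable_on {0..t}"
    and NZ: "((\<lambda>s. \<Lambda> s X) has_vector_derivative integral {0..t} (\<lambda>s. KNZ (t - s) (\<Lambda> s X)))
      (at t within {0..})"
    and "0 \<le> t"
  shows "(\<eta> has_real_derivative integral {0..t} (\<lambda>r. \<eta> (t - r) * h (KNZ r X))) (at t within {0..})"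
proof -
  have h_scale: "h (r *\<^sub>R Y) = r * h Y" for r Y
    using linear_scale[OF bounded_linear.linear[OF h(1)]] by simp
  have KNZ_evol: "KNZ (t - s) (\<Lambda> s X) = \<eta> s *\<^sub>R KNZ (t - s) X" if "s \<in> {0..t}" for s
    using evol that by (simp add: clinear_map_scaleR[OF lin])
  have int': "(\<lambda>s. \<eta> s *\<^sub>R KNZ (t - s) X) integrable_on {0..t}"
    using integrable_eq[OF int KNZ_evol] .
  have g_int: "(\<lambda>s. \<eta> s * h (KNZ (t - s) X)) integrable_on {0..t}"
    using integrable_linear[OF int' h(1)] by (simp add: o_def h_scale)
  have "integral {0..t} (\<lambda>s. KNZ (t - s) (\<Lambda> s X)) = integral {0..t} (\<lambda>s. \<eta> s *\<^sub>R KNZ (t - s) X)"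
    by (rule integral_cong) (rule KNZ_evol)
  then have "h (integral {0..t} (\<lambda>s. KNZ (t - s) (\<Lambda> s X)))
      = integral {0..t} (\<lambda>s. \<eta> s * h (KNZ (t - s) X))"
    using integral_linear[OF int' h(1)] by (simp add: o_def h_scale)
  also have "\<dots> = integral {0..t} (\<lambda>r. \<eta> (t - r) * h (KNZ r X))"
    using integral_reflect_Icc[OF g_int] by simp
  finally have "((\<lambda>s. h (\<Lambda> s X)) has_vector_derivative integral {0..t} (\<lambda>r. \<eta> (t - r) * h (KNZ r X)))
      (at t within {0..})"
    using bounded_linear.has_vector_derivative[OF h(1) NZ] by simp
  moreover have "h (\<Lambda> s X) = \<eta> s" if "s \<in> {0..}" for s
    using evol that h(2) by (simp add: h_scale)
  ultimately show ?thesis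
    unfolding has_real_derivative_iff_has_vector_derivative
    using has_vector_derivative_transform[of t "{0..}" \<eta> "\<lambda>s. h (\<Lambda> s X)"] \<open>0 \<le> t\<close> by simp
qed

lemma P_divisible_memory_kernel_nonpos:
  fixes KNZ :: "real \<Rightarrow> 'n::finite supop" and h :: "'n cmat \<Rightarrow> real"
  assumes "P_divisible \<Lambda>" "X \<noteq> 0" and h: "bounded_linear h" "h X = 1"
    and evol: "\<And>t. 0 \<le> t \<Longrightarrow> \<Lambda> t X = \<eta> t *\<^sub>R X" and "\<eta> 0 = 1" and pos: "\<And>t. 0 < \<eta> t"
    and KNZ_lin: "\<And>t. clinear_map (KNZ t)"
    and KNZ_int: "\<And>t Y. 0 \<le> t \<Longrightarrow> (\<lambda>s. KNZ s Y) integrable_on {0..t}"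
    and NZ: "\<And>t \<rho>. 0 \<le> t \<Longrightarrow>
      (\<lambda>s. KNZ (t - s) (\<Lambda> s \<rho>)) integrable_on {0..t} \<and>
      ((\<lambda>s. \<Lambda> s \<rho>) has_vector_derivative integral {0..t} (\<lambda>s. KNZ (t - s) (\<Lambda> s \<rho>))) (at t within {0..})"
    and "0 \<le> T"
  shows "integral {0..T} (\<lambda>r. h (KNZ r X)) \<le> 0"
proof (rule volterra_cumulative_kernel_nonpos)
  show "\<eta> t \<le> \<eta> s" if "s \<in> {0..T}" "t \<in> {0..T}" "s \<le> t" for s t
    using P_divisible_eigenmode_antimono[OF assms(1,2) evol pos] that by simp
  show "(\<lambda>r. h (KNZ r X)) integrable_on {0..T}"
    using integrable_linear[OF KNZ_int[OF \<open>0 \<le> T\<close>] h(1)] by (simp add: o_def)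
  show "(\<eta> has_real_derivative integral {0..t} (\<lambda>r. \<eta> (t - r) * h (KNZ r X))) (at t within {0..T})"
    if "t \<in> {0..T}" for t
  proof -
    have "0 \<le> t"
      using that by simp
    from nakajima_zwanzig_eigenmode_derivative[where KNZ=KNZ and \<Lambda>=\<Lambda> and \<eta>=\<eta>,
        OF KNZ_lin h evol NZ[OF this, THEN conjunct1] NZ[OF this, THEN conjunct2] this]
    show ?thesis
      by (rule has_field_derivative_subset) (use that in auto)
  qed
qed (simp_all add: \<open>\<eta> 0 = 1\<close> pos)

theorem corollary4:
  fixes \<psi> :: "nat \<Rightarrow> nat \<Rightarrow> complex^'n::finite"
    and \<gamma> :: "nat \<Rightarrow> real \<Rightarrow> real"
    and \<Lambda> :: "real \<Rightarrow> 'n supop"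
    and KNZ :: "real \<Rightarrow> 'n supop"
    and A :: "'i set"
    and \<sigma> \<tau> :: "'i \<Rightarrow> 'n cmat"
    and mTCL :: "'i \<Rightarrow> real \<Rightarrow> complex"
  defines "d \<equiv> CARD('n)"
  defines "U \<equiv> (\<lambda>\<alpha>. pauli_unitary (\<psi> \<alpha>))"
  defines "KTCL \<equiv> (\<lambda>t \<rho>. (\<Sum>\<alpha>\<in>{1..d+1}. csmult (complex_of_real (\<gamma> \<alpha> t)) (pauli_L (U \<alpha>) \<rho>)))"
  defines "G \<equiv> (\<lambda>\<alpha> t. vector_derivative (\<lambda>s. exp (integral {0..s} (mTCL \<alpha>))) (at t))"
  defines "mRed \<equiv> (\<lambda>\<alpha> t. trace (adj (\<sigma> \<alpha>) ** integral {0..t} (\<lambda>s. KNZ s (\<tau> \<alpha>))))"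
  assumes d_ge: "d \<ge> 2"
    \<comment> \<open>d+1 mutually unbiased bases and the generalized Pauli unitaries built from them\<close>
  assumes onb: "\<And>\<alpha>. \<alpha> \<in> {1..d+1} \<Longrightarrow> orthonormal_basis (\<psi> \<alpha>)"
  assumes mub: "\<And>\<alpha> \<beta>. \<alpha> \<in> {1..d+1} \<Longrightarrow> \<beta> \<in> {1..d+1} \<Longrightarrow> \<alpha> \<noteq> \<beta> \<Longrightarrow> mutually_unbiased (\<psi> \<alpha>) (\<psi> \<beta>)"
    \<comment> \<open>regular rates\<close>
  assumes \<gamma>_cont: "\<And>\<alpha>. \<alpha> \<in> {1..d+1} \<Longrightarrow> continuous_on {0..} (\<gamma> \<alpha>)"
    \<comment> \<open>time-local (TCL) master equation\<close>
  assumes \<Lambda>0: "\<Lambda> 0 = id"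
  assumes TCL: "\<And>t \<rho>. t \<ge> 0 \<Longrightarrow>
      ((\<lambda>s. \<Lambda> s \<rho>) has_vector_derivative KTCL t (\<Lambda> t \<rho>)) (at t within {0..})"
    \<comment> \<open>Nakajima-Zwanzig equation with memory kernel KNZ\<close>
  assumes KNZ_lin: "\<And>t. clinear_map (KNZ t)"
  assumes KNZ_int: "\<And>t X. t \<ge> 0 \<Longrightarrow> (\<lambda>s. KNZ s X) integrable_on {0..t}"
  assumes NZ: "\<And>t \<rho>. t \<ge> 0 \<Longrightarrow>
      (\<lambda>s. KNZ (t - s) (\<Lambda> s \<rho>)) integrable_on {0..t} \<and>
      ((\<lambda>s. \<Lambda> s \<rho>) has_vector_derivative integral {0..t} (\<lambda>s. KNZ (t - s) (\<Lambda> s \<rho>))) (at t within {0..})"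
    \<comment> \<open>time-independent eigen-decomposition of KTCL into rank-one maps\<close>
  assumes A_fin: "finite A" and A_card: "card A = d^2"
  assumes biorth: "\<And>\<alpha> \<beta>. \<alpha> \<in> A \<Longrightarrow> \<beta> \<in> A \<Longrightarrow> trace (adj (\<sigma> \<alpha>) ** \<tau> \<beta>) = (if \<alpha> = \<beta> then 1 else 0)"
  assumes decomp: "\<And>t \<omega>. t \<ge> 0 \<Longrightarrow>
      KTCL t \<omega> = (\<Sum>\<alpha>\<in>A. csmult (mTCL \<alpha> t) (rank1_map (\<sigma> \<alpha>) (\<tau> \<alpha>) \<omega>))"
    \<comment> \<open>Laplace transforms of G_alpha have modulus < 1\<close>
  assumes laplace: "\<And>\<alpha> u. \<alpha> \<in> A \<Longrightarrow> u > 0 \<Longrightarrow>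
      (\<lambda>t. exp (- (u * t)) *\<^sub>R G \<alpha> t) integrable_on {0..} \<and>
      cmod (integral {0..} (\<lambda>t. exp (- (u * t)) *\<^sub>R G \<alpha> t)) < 1"
    \<comment> \<open>some Redfield eigenvalue is (real and) positive\<close>
  assumes pos: "\<exists>\<alpha>\<in>A. \<exists>t\<ge>0. Im (mRed \<alpha> t) = 0 \<and> Re (mRed \<alpha> t) > 0"
  shows "\<not> P_divisible \<Lambda>"
proof
  assume "P_divisible \<Lambda>"
  obtain \<alpha>\<^sub>0 t\<^sub>0 where \<alpha>\<^sub>0: "\<alpha>\<^sub>0 \<in> A" and "0 \<le> t\<^sub>0" and Red_pos: "0 < Re (mRed \<alpha>\<^sub>0 t\<^sub>0)"
    using pos by blast
  have bi: "biorthogonal A \<sigma> \<tau>"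
    using biorth by (simp add: biorthogonal_def)
  have K: "KTCL t = eigen_expansion A (\<lambda>\<alpha>. mTCL \<alpha> t) \<sigma> \<tau>" if "0 \<le> t" for t
    using decomp[OF that] by (simp add: fun_eq_iff eigen_expansion_def)
  have K_sa: "hs_selfadjoint (KTCL t)" for t
    unfolding KTCL_def U_def using onb by (intro hs_selfadjoint_real_combination hs_selfadjoint_pauli_L)
  have K_cont: "continuous_on {0..} (\<lambda>t. hs_inner X (KTCL t Y))" for X Y
    unfolding KTCL_def hs_inner_sum hs_inner_csmult using \<gamma>_cont by (intro continuous_intros) auto
  define \<eta> where "\<eta> = (\<lambda>t. exp (integral {0..t} (\<lambda>s. Re (mTCL \<alpha>\<^sub>0 s))))"
  have evol: "\<Lambda> t (\<tau> \<alpha>\<^sub>0) = \<eta> t *\<^sub>R \<tau> \<alpha>\<^sub>0" if "0 \<le> t" for t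
    unfolding \<eta>_def using A_fin bi K K_sa K_cont \<Lambda>0 TCL \<alpha>\<^sub>0 that
    by (rule selfadjoint_generator_eigenmode_evolution)
  define h where "h = (\<lambda>X. Re (hs_inner (\<sigma> \<alpha>\<^sub>0) X))"
  have h_bl: "bounded_linear h"
    unfolding h_def by (rule bounded_linear_compose[OF bounded_linear_Re bounded_linear_hs_inner])
  have "integral {0..t\<^sub>0} (\<lambda>r. h (KNZ r (\<tau> \<alpha>\<^sub>0))) \<le> 0"
    by (rule P_divisible_memory_kernel_nonpos[OF \<open>P_divisible \<Lambda>\<close> biorthogonal_nonzero[OF bi \<alpha>\<^sub>0] h_bl
          _ evol _ _ KNZ_lin KNZ_int NZ \<open>0 \<le> t\<^sub>0\<close>])
       (simp_all add: h_def \<eta>_def biorth \<alpha>\<^sub>0)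
  moreover have "integral {0..t\<^sub>0} (\<lambda>r. h (KNZ r (\<tau> \<alpha>\<^sub>0))) = Re (mRed \<alpha>\<^sub>0 t\<^sub>0)"
    using integral_linear[OF KNZ_int[OF \<open>0 \<le> t\<^sub>0\<close>] h_bl] by (simp add: mRed_def h_def o_def)
  ultimately show False
    using Red_pos by simp
qed

end
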